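(* Let $k$ be a field, $\Delta$ a finite connected quiver without oriented cycles, $X$ a finite length $k\Delta$-module and $M$ an endo-finite $k\Delta$-module. If $\langle\operatorname{\bold{dim}}X,\operatorname{\bold{Dim}}M\rangle>0$, then $\operatorname{Hom}(X,M)\neq 0$.
   Context: Modules are representations $(M_i,M_\alpha)$ of $\Delta$ with vertex set $\Delta_0$, arrow set $\Delta_1$, arrows $\alpha\colon s(\alpha)\to t(\alpha)$. $E(M)=\operatorname{End}(M)^{\mathrm{op}}$; $M$ is endo-finite if it has finite length as an $E(M)$-module. $\operatorname{\bold{dim}}X\in\mathbb Z^{\Delta_0}$ has $i$-th entry $\dim_kX_i$, and $(\operatorname{\bold{Dim}}M)_i$ is the length of $M_i$ as an $E(M)$-module. The Euler form is $\langle x,y\rangle=\sum_{i\in\Delta_0}x_iy_i-\sum_{\alpha\in\Delta_1}x_{s(\alpha)}y_{t(\alpha)}$. *)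

theory Defs
  imports Complex_Main
begin

record ('a, 'b) quiver =
  verts :: "'a set"
  arrs  :: "'b set"
  src   :: "'b \<Rightarrow> 'a"
  tgt   :: "'b \<Rightarrow> 'a"

definition arrow_rel :: "('a, 'b) quiver \<Rightarrow> ('a \<times> 'a) set" where
  "arrow_rel Q = {(src Q \<alpha>, tgt Q \<alpha>) | \<alpha>. \<alpha> \<in> arrs Q}"

definition finite_quiver :: "('a, 'b) quiver \<Rightarrow> bool" where
  "finite_quiver Q \<longleftrightarrow> finite (verts Q) \<and> finite (arrs Q)
     \<and> (\<forall>\<alpha>\<in>arrs Q. src Q \<alpha> \<in> verts Q \<and> tgt Q \<alpha> \<in> verts Q)"

definition connected_quiver :: "('a, 'b) quiver \<Rightarrow> bool" where
  "connected_quiver Q \<longleftrightarrow> verts Q \<noteq> {} \<and>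
     (\<forall>i\<in>verts Q. \<forall>j\<in>verts Q. (i, j) \<in> (arrow_rel Q \<union> (arrow_rel Q)\<inverse>)\<^sup>*)"

definition acyclic_quiver :: "('a, 'b) quiver \<Rightarrow> bool" where
  "acyclic_quiver Q \<longleftrightarrow> (\<forall>i. (i, i) \<notin> (arrow_rel Q)\<^sup>+)"

text \<open>A representation (= k Q-module): subspaces V i of an ambient k-vector space
  (with scalar multiplication sc), and k-linear maps f \<alpha> : V (src \<alpha>) \<rightarrow> V (tgt \<alpha>).\<close>
definition is_rep :: "('a, 'b) quiver \<Rightarrow> ('k::field \<Rightarrow> 'v::ab_group_add \<Rightarrow> 'v)
    \<Rightarrow> ('a \<Rightarrow> 'v set) \<Rightarrow> ('b \<Rightarrow> 'v \<Rightarrow> 'v) \<Rightarrow> bool" where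
  "is_rep Q sc V f \<longleftrightarrow> vector_space sc
     \<and> (\<forall>i\<in>verts Q. Modules.module.subspace sc (V i))
     \<and> (\<forall>\<alpha>\<in>arrs Q. \<forall>x\<in>V (src Q \<alpha>). f \<alpha> x \<in> V (tgt Q \<alpha>))
     \<and> (\<forall>\<alpha>\<in>arrs Q. \<forall>x\<in>V (src Q \<alpha>). \<forall>y\<in>V (src Q \<alpha>). f \<alpha> (x + y) = f \<alpha> x + f \<alpha> y)
     \<and> (\<forall>\<alpha>\<in>arrs Q. \<forall>c. \<forall>x\<in>V (src Q \<alpha>). f \<alpha> (sc c x) = sc c (f \<alpha> x))"

definition is_hom :: "('a, 'b) quiver
    \<Rightarrow> ('k::field \<Rightarrow> 'x::ab_group_add \<Rightarrow> 'x) \<Rightarrow> ('a \<Rightarrow> 'x set) \<Rightarrow> ('b \<Rightarrow> 'x \<Rightarrow> 'x)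
    \<Rightarrow> ('k \<Rightarrow> 'm::ab_group_add \<Rightarrow> 'm) \<Rightarrow> ('a \<Rightarrow> 'm set) \<Rightarrow> ('b \<Rightarrow> 'm \<Rightarrow> 'm)
    \<Rightarrow> ('a \<Rightarrow> 'x \<Rightarrow> 'm) \<Rightarrow> bool" where
  "is_hom Q scX VX fX scM VM fM g \<longleftrightarrow>
       (\<forall>i\<in>verts Q. \<forall>x\<in>VX i. g i x \<in> VM i)
     \<and> (\<forall>i\<in>verts Q. \<forall>x\<in>VX i. \<forall>y\<in>VX i. g i (x + y) = g i x + g i y)
     \<and> (\<forall>i\<in>verts Q. \<forall>c. \<forall>x\<in>VX i. g i (scX c x) = scM c (g i x))
     \<and> (\<forall>\<alpha>\<in>arrs Q. \<forall>x\<in>VX (src Q \<alpha>). g (tgt Q \<alpha>) (fX \<alpha> x) = fM \<alpha> (g (src Q \<alpha>) x))"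

definition hom_nonzero :: "('a, 'b) quiver
    \<Rightarrow> ('k::field \<Rightarrow> 'x::ab_group_add \<Rightarrow> 'x) \<Rightarrow> ('a \<Rightarrow> 'x set) \<Rightarrow> ('b \<Rightarrow> 'x \<Rightarrow> 'x)
    \<Rightarrow> ('k \<Rightarrow> 'm::ab_group_add \<Rightarrow> 'm) \<Rightarrow> ('a \<Rightarrow> 'm set) \<Rightarrow> ('b \<Rightarrow> 'm \<Rightarrow> 'm) \<Rightarrow> bool" where
  "hom_nonzero Q scX VX fX scM VM fM \<longleftrightarrow>
     (\<exists>g. is_hom Q scX VX fX scM VM fM g \<and> (\<exists>i\<in>verts Q. \<exists>x\<in>VX i. g i x \<noteq> 0))"

text \<open>Length of a module, computed from its set L of submodules (ordered by inclusion):
  strict chains S0 \<subset> S1 \<subset> ... \<subset> Sn have length n.\<close>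
definition strict_chain :: "'c set set \<Rightarrow> 'c set list \<Rightarrow> bool" where
  "strict_chain L cs \<longleftrightarrow> cs \<noteq> [] \<and> set cs \<subseteq> L \<and> sorted_wrt (\<subset>) cs"

definition finite_length :: "'c set set \<Rightarrow> bool" where
  "finite_length L \<longleftrightarrow> (\<exists>n. \<forall>cs. strict_chain L cs \<longrightarrow> length cs \<le> Suc n)"

definition mod_length :: "'c set set \<Rightarrow> nat" where
  "mod_length L = (GREATEST n. \<exists>cs. strict_chain L cs \<and> length cs = Suc n)"

text \<open>A subrepresentation is a family U i \<subseteq> V i of subspaces stable under the arrow maps;
  for chains, a family is identified with its total space (disjoint union of the U i).\<close>
definition subreps :: "('a, 'b) quiver \<Rightarrow> ('k::field \<Rightarrow> 'v::ab_group_add \<Rightarrow> 'v)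
    \<Rightarrow> ('a \<Rightarrow> 'v set) \<Rightarrow> ('b \<Rightarrow> 'v \<Rightarrow> 'v) \<Rightarrow> ('a \<times> 'v) set set" where
  "subreps Q sc V f = {Sigma (verts Q) U | U.
       (\<forall>i\<in>verts Q. U i \<subseteq> V i \<and> Modules.module.subspace sc (U i))
     \<and> (\<forall>\<alpha>\<in>arrs Q. \<forall>x\<in>U (src Q \<alpha>). f \<alpha> x \<in> U (tgt Q \<alpha>))}"

definition finite_length_rep :: "('a, 'b) quiver \<Rightarrow> ('k::field \<Rightarrow> 'v::ab_group_add \<Rightarrow> 'v)
    \<Rightarrow> ('a \<Rightarrow> 'v set) \<Rightarrow> ('b \<Rightarrow> 'v \<Rightarrow> 'v) \<Rightarrow> bool" where
  "finite_length_rep Q sc V f \<longleftrightarrow> finite_length (subreps Q sc V f)"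

text \<open>E(M) = End(M)^op acting on M: endomorphisms \<phi> act vertexwise.\<close>
definition End_rep :: "('a, 'b) quiver \<Rightarrow> ('k::field \<Rightarrow> 'm::ab_group_add \<Rightarrow> 'm)
    \<Rightarrow> ('a \<Rightarrow> 'm set) \<Rightarrow> ('b \<Rightarrow> 'm \<Rightarrow> 'm) \<Rightarrow> ('a \<Rightarrow> 'm \<Rightarrow> 'm) set" where
  "End_rep Q sc V f = {\<phi>. is_hom Q sc V f sc V f \<phi>}"

definition total_space :: "('a, 'b) quiver \<Rightarrow> ('a \<Rightarrow> 'm::ab_group_add set) \<Rightarrow> ('a \<Rightarrow> 'm) set" where
  "total_space Q V = {m. (\<forall>i\<in>verts Q. m i \<in> V i) \<and> (\<forall>i. i \<notin> verts Q \<longrightarrow> m i = 0)}"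

definition E_submods :: "('a, 'b) quiver \<Rightarrow> ('k::field \<Rightarrow> 'm::ab_group_add \<Rightarrow> 'm)
    \<Rightarrow> ('a \<Rightarrow> 'm set) \<Rightarrow> ('b \<Rightarrow> 'm \<Rightarrow> 'm) \<Rightarrow> ('a \<Rightarrow> 'm) set set" where
  "E_submods Q sc V f = {N. N \<subseteq> total_space Q V \<and> (\<lambda>_. 0) \<in> N
      \<and> (\<forall>m\<in>N. \<forall>n\<in>N. (\<lambda>i. m i + n i) \<in> N)
      \<and> (\<forall>\<phi>\<in>End_rep Q sc V f. \<forall>m\<in>N. (\<lambda>i. if i \<in> verts Q then \<phi> i (m i) else 0) \<in> N)}"

definition E_submods_at :: "('a, 'b) quiver \<Rightarrow> ('k::field \<Rightarrow> 'm::ab_group_add \<Rightarrow> 'm)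
    \<Rightarrow> ('a \<Rightarrow> 'm set) \<Rightarrow> ('b \<Rightarrow> 'm \<Rightarrow> 'm) \<Rightarrow> 'a \<Rightarrow> 'm set set" where
  "E_submods_at Q sc V f i = {N. N \<subseteq> V i \<and> 0 \<in> N
      \<and> (\<forall>m\<in>N. \<forall>n\<in>N. m + n \<in> N)
      \<and> (\<forall>\<phi>\<in>End_rep Q sc V f. \<forall>m\<in>N. \<phi> i m \<in> N)}"

definition endo_finite :: "('a, 'b) quiver \<Rightarrow> ('k::field \<Rightarrow> 'm::ab_group_add \<Rightarrow> 'm)
    \<Rightarrow> ('a \<Rightarrow> 'm set) \<Rightarrow> ('b \<Rightarrow> 'm \<Rightarrow> 'm) \<Rightarrow> bool" where
  "endo_finite Q sc V f \<longleftrightarrow> finite_length (E_submods Q sc V f)"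

definition dimv :: "('a, 'b) quiver \<Rightarrow> ('k::field \<Rightarrow> 'v::ab_group_add \<Rightarrow> 'v)
    \<Rightarrow> ('a \<Rightarrow> 'v set) \<Rightarrow> 'a \<Rightarrow> int" where
  "dimv Q sc V i = int (Vector_Spaces.vector_space.dim sc (V i))"

definition Dimv :: "('a, 'b) quiver \<Rightarrow> ('k::field \<Rightarrow> 'm::ab_group_add \<Rightarrow> 'm)
    \<Rightarrow> ('a \<Rightarrow> 'm set) \<Rightarrow> ('b \<Rightarrow> 'm \<Rightarrow> 'm) \<Rightarrow> 'a \<Rightarrow> int" where
  "Dimv Q sc V f i = int (mod_length (E_submods_at Q sc V f i))"

definition euler_form :: "('a, 'b) quiver \<Rightarrow> ('a \<Rightarrow> int) \<Rightarrow> ('a \<Rightarrow> int) \<Rightarrow> int" where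
  "euler_form Q x y = (\<Sum>i\<in>verts Q. x i * y i) - (\<Sum>\<alpha>\<in>arrs Q. x (src Q \<alpha>) * y (tgt Q \<alpha>))"

end

theory Submission
  imports Defs "HOL-Library.Function_Algebras"
begin

text \<open>If \<open>Hom(X, M) = 0\<close>, applying \<open>Hom(-, M)\<close> to the standard resolution of \<open>X\<close> embeds,
  as \<open>E(M)\<close>-modules, the direct sum of \<open>dim X\<^sub>i\<close> copies of \<open>M\<^sub>i\<close> over all vertices \<open>i\<close> into the
  direct sum of \<open>dim X\<^sub>s\<^sub>\<alpha>\<close> copies of \<open>M\<^sub>t\<^sub>\<alpha>\<close> over all arrows \<open>\<alpha>\<close>. Since \<open>-1 \<in> E(M)\<close>,
  \<open>E(M)\<close>-length is additive on finite direct sums, so comparing lengths gives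
  \<open>\<Sum>\<^sub>i dim X\<^sub>i \<cdot> Dim M\<^sub>i \<le> \<Sum>\<^sub>\<alpha> dim X\<^sub>s\<^sub>\<alpha> \<cdot> Dim M\<^sub>t\<^sub>\<alpha>\<close>, i.e. the Euler form is not positive.
  Finite length of \<open>X\<close>, together with acyclicity of the quiver, makes every \<open>X\<^sub>i\<close>
  finite-dimensional.\<close>

definition length_le :: "'c set set \<Rightarrow> nat \<Rightarrow> bool" where
  "length_le L n \<longleftrightarrow> (\<forall>cs. strict_chain L cs \<longrightarrow> length cs \<le> Suc n)"

definition length_ge :: "'c set set \<Rightarrow> nat \<Rightarrow> bool" where
  "length_ge L n \<longleftrightarrow> (\<exists>cs. strict_chain L cs \<and> length cs = Suc n)"

lemma length_ge_le_trans: "length_ge L n \<Longrightarrow> length_le L m \<Longrightarrow> n \<le> m"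
  unfolding length_ge_def length_le_def by fastforce

lemma finite_length_iff_length_le: "finite_length L \<longleftrightarrow> (\<exists>n. length_le L n)"
  unfolding finite_length_def length_le_def ..

lemma mod_length_bounds:
  assumes "finite_length L" and "L \<noteq> {}"
  shows "length_le L (mod_length L)" and "length_ge L (mod_length L)"
proof -
  have mod_length: "mod_length L = (GREATEST n. length_ge L n)"
    unfolding mod_length_def length_ge_def ..
  obtain n where n: "length_le L n"
    using assms(1) finite_length_iff_length_le by blast
  obtain N where "N \<in> L"
    using assms(2) by blast
  then have "length_ge L 0"
    unfolding length_ge_def strict_chain_def by (intro exI[of _ "[N]"]) simp
  moreover have bounded: "\<And>m. length_ge L m \<Longrightarrow> m \<le> n"
    using length_ge_le_trans n by blast
  ultimately show "length_ge L (mod_length L)"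
    unfolding mod_length by (rule GreatestI_nat)
  show "length_le L (mod_length L)"
    unfolding length_le_def
  proof (intro allI impI)
    fix cs assume cs: "strict_chain L cs"
    then obtain m where m: "length cs = Suc m"
      by (cases cs) (auto simp: strict_chain_def)
    with cs have "length_ge L m"
      unfolding length_ge_def by blast
    then have "m \<le> mod_length L"
      unfolding mod_length using bounded by (rule Greatest_le_nat)
    then show "length cs \<le> Suc (mod_length L)"
      using m by simp
  qed
qed

lemma length_le_singleton: "length_le {N} 0"
  unfolding length_le_def strict_chain_def
proof (intro allI impI)
  fix cs :: "'a set list" assume "cs \<noteq> [] \<and> set cs \<subseteq> {N} \<and> sorted_wrt (\<subset>) cs"
  then show "length cs \<le> Suc 0"
    by (cases cs) (auto simp: subset_singleton_iff)
qed

lemma length_ge_singleton: "length_ge {N} 0"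
  unfolding length_ge_def strict_chain_def by (intro exI[of _ "[N]"]) simp

lemma psubset_if_witness: "A \<subseteq> B \<Longrightarrow> x \<in> B \<Longrightarrow> x \<notin> A \<Longrightarrow> A \<subset> B"
  by blast

lemma strict_chain_map:
  assumes "strict_chain L cs" and "\<And>N. N \<in> L \<Longrightarrow> h N \<in> L'"
    and "\<And>N N'. N \<in> L \<Longrightarrow> N' \<in> L \<Longrightarrow> N \<subset> N' \<Longrightarrow> h N \<subset> h N'"
  shows "strict_chain L' (map h cs)"
proof -
  have cs: "cs \<noteq> []" "set cs \<subseteq> L" "sorted_wrt (\<subset>) cs"
    using assms(1) unfolding strict_chain_def by auto
  have "sorted_wrt (\<lambda>N N'. h N \<subset> h N') cs"
  proof (rule sorted_wrt_mono_rel[OF _ cs(3)])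
    fix N N' assume "N \<in> set cs" "N' \<in> set cs" "N \<subset> N'"
    then show "h N \<subset> h N'"
      using cs(2) by (intro assms(3)) auto
  qed
  then have "sorted_wrt (\<subset>) (map h cs)"
    unfolding sorted_wrt_map .
  moreover have "set (map h cs) \<subseteq> L'"
    using cs(2) assms(2) by auto
  ultimately show ?thesis
    using cs(1) unfolding strict_chain_def by simp
qed

lemma length_ge_strict_mono:
  assumes "length_ge L n" and "\<And>N. N \<in> L \<Longrightarrow> h N \<in> L'"
    and "\<And>N N'. N \<in> L \<Longrightarrow> N' \<in> L \<Longrightarrow> N \<subset> N' \<Longrightarrow> h N \<subset> h N'"
  shows "length_ge L' n"
proof -
  obtain cs where "strict_chain L cs" and "length cs = Suc n"
    using assms(1) unfolding length_ge_def by blast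
  then show ?thesis
    unfolding length_ge_def using strict_chain_map[OF _ assms(2,3)]
    by (intro exI[of _ "map h cs"]) simp
qed

lemma length_le_strict_mono:
  assumes "length_le L' n" and "\<And>N. N \<in> L \<Longrightarrow> h N \<in> L'"
    and "\<And>N N'. N \<in> L \<Longrightarrow> N' \<in> L \<Longrightarrow> N \<subset> N' \<Longrightarrow> h N \<subset> h N'"
  shows "length_le L n"
  unfolding length_le_def
proof (intro allI impI)
  fix cs assume "strict_chain L cs"
  then have "strict_chain L' (map h cs)"
    by (rule strict_chain_map[OF _ assms(2,3)])
  then show "length cs \<le> Suc n"
    using assms(1) unfolding length_le_def by fastforce
qed

lemma sorted_list_of_chain:
  assumes "finite T" and "chain\<^sub>\<subseteq> T"
  obtains cs where "set cs = T" and "sorted_wrt (\<subset>) cs"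
  using assms
proof (induction T arbitrary: thesis rule: finite_induct)
  case empty
  then show ?case by auto
next
  case (insert x T)
  have "chain\<^sub>\<subseteq> T"
    using insert.prems(2) unfolding chain_subset_def by blast
  then obtain cs where cs: "set cs = T" "sorted_wrt (\<subset>) cs"
    using insert.IH by blast
  have "y \<subset> x \<or> x \<subset> y" if "y \<in> T" for y
    using insert.prems(2) insert.hyps(2) that unfolding chain_subset_def by blast
  then have "set (filter (\<lambda>y. y \<subset> x) cs @ x # filter (\<lambda>y. x \<subset> y) cs) = insert x T"
    using cs(1) by auto
  moreover have "sorted_wrt (\<subset>) (filter (\<lambda>y. y \<subset> x) cs @ x # filter (\<lambda>y. x \<subset> y) cs)"
    using cs(2) by (auto simp: sorted_wrt_append sorted_wrt_filter)
  ultimately show ?case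
    using insert.prems(1) by blast
qed

lemma card_chain_le:
  assumes "length_le L n" and "finite T" and "T \<noteq> {}" and "T \<subseteq> L" and "chain\<^sub>\<subseteq> T"
  shows "card T \<le> Suc n"
proof -
  obtain cs where cs: "set cs = T" "sorted_wrt (\<subset>) cs"
    using sorted_list_of_chain assms(2,5) by blast
  have "distinct cs"
    using cs(2) by (induction cs) auto
  moreover have "strict_chain L cs"
    using cs assms(3,4) unfolding strict_chain_def by auto
  ultimately show ?thesis
    using assms(1) cs(1) distinct_card unfolding length_le_def by (metis)
qed

lemma chain_subset_sorted: "sorted_wrt (\<subset>) cs \<Longrightarrow> chain\<^sub>\<subseteq> (set cs)"
  unfolding chain_subset_def by (induction cs) auto

lemma chain_subset_image:
  assumes "chain\<^sub>\<subseteq> T" and "\<And>N N'. N \<in> T \<Longrightarrow> N' \<in> T \<Longrightarrow> N \<subseteq> N' \<Longrightarrow> p N \<subseteq> p N'"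
  shows "chain\<^sub>\<subseteq> (p ` T)"
  unfolding chain_subset_def
proof (intro ballI)
  fix x y assume "x \<in> p ` T" "y \<in> p ` T"
  then obtain N N' where "N \<in> T" "N' \<in> T" "x = p N" "y = p N'"
    by blast
  then show "x \<subseteq> y \<or> y \<subseteq> x"
    using assms unfolding chain_subset_def by metis
qed

text \<open>A strict step \<open>N \<subset> N'\<close> of the chain is strict in at least one of the two projections.\<close>

lemma strict_chain_length_le_card_images:
  assumes mono1: "\<And>N N'. N \<in> L \<Longrightarrow> N' \<in> L \<Longrightarrow> N \<subseteq> N' \<Longrightarrow> p N \<subseteq> p N'"
    and mono2: "\<And>N N'. N \<in> L \<Longrightarrow> N' \<in> L \<Longrightarrow> N \<subseteq> N' \<Longrightarrow> q N \<subseteq> q N'"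
    and determined: "\<And>N N'. N \<in> L \<Longrightarrow> N' \<in> L \<Longrightarrow> N \<subseteq> N' \<Longrightarrow>
      p N = p N' \<Longrightarrow> q N = q N' \<Longrightarrow> N = N'"
    and "strict_chain L cs"
  shows "length cs + 1 \<le> card (p ` set cs) + card (q ` set cs)"
  using assms(4) unfolding strict_chain_def
proof (induction cs)
  case Nil
  then show ?case by simp
next
  case (Cons N rest)
  show ?case
  proof (cases rest)
    case Nil
    then show ?thesis by simp
  next
    case (Cons H r)
    have L: "N \<in> L" "H \<in> L" "set rest \<subseteq> L" and "N \<subset> H"
      using Cons.prems Cons by auto
    have above: "H \<subseteq> N'" if "N' \<in> set rest" for N'
      using Cons.prems Cons that by auto
    have IH: "length rest + 1 \<le> card (p ` set rest) + card (q ` set rest)"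
      using Cons.IH Cons.prems Cons by auto
    have "p N \<notin> p ` set rest \<or> q N \<notin> q ` set rest"
    proof (rule ccontr)
      assume "\<not> ?thesis"
      then obtain N1 N2 where N12: "N1 \<in> set rest" "N2 \<in> set rest" "p N1 = p N" "q N2 = q N"
        by auto
      have N12L: "N1 \<in> L" "N2 \<in> L"
        using L(3) N12(1,2) by auto
      have "p N \<subseteq> p H" "q N \<subseteq> q H"
        using mono1[OF L(1,2)] mono2[OF L(1,2)] \<open>N \<subset> H\<close> by simp_all
      moreover have "p H \<subseteq> p N1" "q H \<subseteq> q N2"
        using mono1[OF L(2) N12L(1) above] mono2[OF L(2) N12L(2) above] N12(1,2) by simp_all
      ultimately have "N = H"
        using determined[OF L(1,2)] N12(3,4) \<open>N \<subset> H\<close> by simp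
      then show False
        using \<open>N \<subset> H\<close> by simp
    qed
    then show ?thesis
      using IH by (auto simp: card_insert_if)
  qed
qed

lemma length_le_split:
  assumes "length_le L1 a" and "length_le L2 b"
    and into1: "\<And>N. N \<in> L \<Longrightarrow> p N \<in> L1" and into2: "\<And>N. N \<in> L \<Longrightarrow> q N \<in> L2"
    and mono1: "\<And>N N'. N \<in> L \<Longrightarrow> N' \<in> L \<Longrightarrow> N \<subseteq> N' \<Longrightarrow> p N \<subseteq> p N'"
    and mono2: "\<And>N N'. N \<in> L \<Longrightarrow> N' \<in> L \<Longrightarrow> N \<subseteq> N' \<Longrightarrow> q N \<subseteq> q N'"
    and determined: "\<And>N N'. N \<in> L \<Longrightarrow> N' \<in> L \<Longrightarrow> N \<subseteq> N' \<Longrightarrow>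
      p N = p N' \<Longrightarrow> q N = q N' \<Longrightarrow> N = N'"
  shows "length_le L (a + b)"
  unfolding length_le_def
proof (intro allI impI)
  fix cs assume cs: "strict_chain L cs"
  then have L: "set cs \<subseteq> L" "set cs \<noteq> {}" and chain: "chain\<^sub>\<subseteq> (set cs)"
    using chain_subset_sorted unfolding strict_chain_def by auto
  have "length cs + 1 \<le> card (p ` set cs) + card (q ` set cs)"
    using strict_chain_length_le_card_images[OF mono1 mono2 determined cs] .
  moreover have "card (p ` set cs) \<le> Suc a"
  proof (rule card_chain_le[OF assms(1)])
    show "chain\<^sub>\<subseteq> (p ` set cs)"
      by (rule chain_subset_image[OF chain], rule mono1) (use L(1) in auto)
  qed (use L into1 in auto)
  moreover have "card (q ` set cs) \<le> Suc b"
  proof (rule card_chain_le[OF assms(2)])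
    show "chain\<^sub>\<subseteq> (q ` set cs)"
      by (rule chain_subset_image[OF chain], rule mono2) (use L(1) in auto)
  qed (use L into2 in auto)
  ultimately show "length cs \<le> Suc (a + b)"
    by simp
qed

lemma sorted_wrt_psubset_last: "sorted_wrt (\<subset>) cs \<Longrightarrow> N \<in> set cs \<Longrightarrow> N \<subseteq> last cs"
proof (induction cs)
  case (Cons M cs)
  then show ?case by (cases cs) auto
qed simp

lemma length_ge_combine:
  assumes "length_ge L1 a" and "length_ge L2 b"
    and into: "\<And>N1 N2. N1 \<in> L1 \<Longrightarrow> N2 \<in> L2 \<Longrightarrow> comb N1 N2 \<in> L"
    and mono: "\<And>N1 N1' N2. N1 \<in> L1 \<Longrightarrow> N1' \<in> L1 \<Longrightarrow> N2 \<in> L2 \<Longrightarrow>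
        N1 \<subseteq> N1' \<Longrightarrow> comb N1 N2 \<subseteq> comb N1' N2"
    and strict1: "\<And>N1 N1' N2. N1 \<in> L1 \<Longrightarrow> N1' \<in> L1 \<Longrightarrow> N2 \<in> L2 \<Longrightarrow>
        N1 \<subset> N1' \<Longrightarrow> comb N1 N2 \<subset> comb N1' N2"
    and strict2: "\<And>N1 N2 N2'. N1 \<in> L1 \<Longrightarrow> N2 \<in> L2 \<Longrightarrow> N2' \<in> L2 \<Longrightarrow>
        N2 \<subset> N2' \<Longrightarrow> comb N1 N2 \<subset> comb N1 N2'"
  shows "length_ge L (a + b)"
proof -
  obtain cs1 where cs1: "strict_chain L1 cs1" "length cs1 = Suc a"
    using assms(1) by (auto simp: length_ge_def)
  obtain cs2 where cs2: "strict_chain L2 cs2" "length cs2 = Suc b"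
    using assms(2) by (auto simp: length_ge_def)
  then obtain H r where H: "cs2 = H # r"
    by (cases cs2) auto
  have HL: "H \<in> L2"
    using cs2(1) H unfolding strict_chain_def by simp
  define top where "top = last cs1"
  have top: "top \<in> L1" and below_top: "\<And>N. N \<in> set cs1 \<Longrightarrow> N \<subseteq> top"
    using cs1(1) sorted_wrt_psubset_last unfolding strict_chain_def top_def by auto
  have "strict_chain L (map (\<lambda>N. comb N H) cs1)"
    by (rule strict_chain_map[OF cs1(1)]) (use HL into strict1 in auto)
  moreover have "strict_chain L (map (comb top) cs2)"
    by (rule strict_chain_map[OF cs2(1)]) (use top into strict2 in auto)
  moreover have "comb N H \<subset> comb top N2" if "N \<in> set cs1" and "N2 \<in> set r" for N N2
  proof -
    have "N \<in> L1" "N2 \<in> L2" "H \<subset> N2"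
      using cs1(1) cs2(1) H that unfolding strict_chain_def by auto
    then have "comb N H \<subseteq> comb top H" and "comb top H \<subset> comb top N2"
      using mono top HL below_top[OF that(1)] strict2 by auto
    then show ?thesis
      by (rule subset_psubset_trans)
  qed
  ultimately have "strict_chain L (map (\<lambda>N. comb N H) cs1 @ map (comb top) r)" (is "strict_chain L ?cs")
    unfolding strict_chain_def H by (auto simp: sorted_wrt_append)
  then show ?thesis
    unfolding length_ge_def using cs1(2) cs2(2) H by (intro exI[of _ ?cs]) simp
qed

definition stable_submods :: "'v::monoid_add set \<Rightarrow> 'e set \<Rightarrow> ('e \<Rightarrow> 'v \<Rightarrow> 'v) \<Rightarrow> 'v set set" where
  "stable_submods S E act = {N. N \<subseteq> S \<and> 0 \<in> N \<and> (\<forall>m\<in>N. \<forall>n\<in>N. m + n \<in> N)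
     \<and> (\<forall>e\<in>E. \<forall>m\<in>N. act e m \<in> N)}"

lemma stable_submodsI:
  assumes "N \<subseteq> S" and "0 \<in> N" and "\<And>m n. m \<in> N \<Longrightarrow> n \<in> N \<Longrightarrow> m + n \<in> N"
    and "\<And>e m. e \<in> E \<Longrightarrow> m \<in> N \<Longrightarrow> act e m \<in> N"
  shows "N \<in> stable_submods S E act"
  using assms unfolding stable_submods_def by blast

lemma stable_submodsD:
  assumes "N \<in> stable_submods S E act"
  shows "N \<subseteq> S" and "0 \<in> N" and "\<And>m n. m \<in> N \<Longrightarrow> n \<in> N \<Longrightarrow> m + n \<in> N"
    and "\<And>e m. e \<in> E \<Longrightarrow> m \<in> N \<Longrightarrow> act e m \<in> N"
  using assms unfolding stable_submods_def by blast+

lemma image_stable_submods: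
  assumes N: "N \<in> stable_submods S E act"
    and into: "\<And>x. x \<in> S \<Longrightarrow> h x \<in> S'" and zero: "h 0 = 0"
    and add: "\<And>x y. x \<in> S \<Longrightarrow> y \<in> S \<Longrightarrow> h (x + y) = h x + h y"
    and equivariant: "\<And>e x. e \<in> E \<Longrightarrow> x \<in> S \<Longrightarrow> h (act e x) = act' e (h x)"
  shows "h ` N \<in> stable_submods S' E act'"
proof (rule stable_submodsI)
  note N_sub = stable_submodsD(1)[OF N]
  show "h ` N \<subseteq> S'"
    using N_sub into by blast
  show "0 \<in> h ` N"
    by (rule rev_image_eqI[OF stable_submodsD(2)[OF N]]) (simp add: zero)
  show "m + n \<in> h ` N" if mn: "m \<in> h ` N" "n \<in> h ` N" for m n
  proof -
    obtain x y where xy: "x \<in> N" "y \<in> N" and mn_eq: "m = h x" "n = h y"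
      using mn by blast
    have "x \<in> S" "y \<in> S"
      using xy N_sub by auto
    then have "m + n = h (x + y)"
      using add mn_eq by simp
    then show ?thesis
      using stable_submodsD(3)[OF N xy] by (rule rev_image_eqI[rotated])
  qed
  show "act' e m \<in> h ` N" if e: "e \<in> E" and m: "m \<in> h ` N" for e m
  proof -
    obtain x where x: "x \<in> N" and m_eq: "m = h x"
      using m by blast
    have "x \<in> S"
      using x N_sub by auto
    then have "act' e m = h (act e x)"
      using equivariant[OF e] m_eq by simp
    then show ?thesis
      using stable_submodsD(4)[OF N e x] by (rule rev_image_eqI[rotated])
  qed
qed

lemma image_psubset_inj_on:
  assumes "inj_on h S" and "N' \<subseteq> S" and "N \<subset> N'"
  shows "h ` N \<subset> h ` N'"
proof -
  obtain x where x: "x \<in> N' - N"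
    using psubset_imp_ex_mem[OF assms(3)] ..
  have "N \<subseteq> S" and "x \<in> S"
    using assms(2,3) x by auto
  then have "h x \<notin> h ` N"
    using x inj_on_image_mem_iff[OF assms(1)] by simp
  then show ?thesis
    using x assms(3) by (intro psubset_if_witness[where x = "h x"]) auto
qed

lemma length_ge_stable_submods_embedding:
  assumes "length_ge (stable_submods S E act) n"
    and "\<And>x. x \<in> S \<Longrightarrow> h x \<in> S'" and "h 0 = 0"
    and "\<And>x y. x \<in> S \<Longrightarrow> y \<in> S \<Longrightarrow> h (x + y) = h x + h y"
    and "\<And>e x. e \<in> E \<Longrightarrow> x \<in> S \<Longrightarrow> h (act e x) = act' e (h x)"
    and inj: "inj_on h S"
  shows "length_ge (stable_submods S' E act') n"
proof (rule length_ge_strict_mono[OF assms(1)])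
  show "h ` N \<in> stable_submods S' E act'" if "N \<in> stable_submods S E act" for N
    using image_stable_submods[where h = h, OF that assms(2-5)] .
  show "h ` N \<subset> h ` N'" if "N' \<in> stable_submods S E act" and "N \<subset> N'" for N N'
    using image_psubset_inj_on[OF inj stable_submodsD(1)[OF that(1)] that(2)] .
qed

lemma length_le_stable_submods_embedding:
  assumes "length_le (stable_submods S' E act') n"
    and "\<And>x. x \<in> S \<Longrightarrow> h x \<in> S'" and "h 0 = 0"
    and "\<And>x y. x \<in> S \<Longrightarrow> y \<in> S \<Longrightarrow> h (x + y) = h x + h y"
    and "\<And>e x. e \<in> E \<Longrightarrow> x \<in> S \<Longrightarrow> h (act e x) = act' e (h x)"
    and inj: "inj_on h S"
  shows "length_le (stable_submods S E act) n"
proof (rule length_le_strict_mono[OF assms(1)])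
  show "h ` N \<in> stable_submods S' E act'" if "N \<in> stable_submods S E act" for N
    using image_stable_submods[where h = h, OF that assms(2-5)] .
  show "h ` N \<subset> h ` N'" if "N' \<in> stable_submods S E act" and "N \<subset> N'" for N N'
    using image_psubset_inj_on[OF inj stable_submodsD(1)[OF that(1)] that(2)] .
qed

definition prod_space :: "'j set \<Rightarrow> ('j \<Rightarrow> 'v::zero set) \<Rightarrow> ('j \<Rightarrow> 'v) set" where
  "prod_space J S = {p. (\<forall>j\<in>J. p j \<in> S j) \<and> (\<forall>j. j \<notin> J \<longrightarrow> p j = 0)}"

definition prod_act :: "'j set \<Rightarrow> ('e \<Rightarrow> 'j \<Rightarrow> 'v \<Rightarrow> 'v) \<Rightarrow> 'e \<Rightarrow> ('j \<Rightarrow> 'v::zero) \<Rightarrow> 'j \<Rightarrow> 'v" where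
  "prod_act J act e p j = (if j \<in> J then act e j (p j) else 0)"

abbreviation prod_submods :: "'j set \<Rightarrow> ('j \<Rightarrow> 'v::monoid_add set) \<Rightarrow> 'e set
    \<Rightarrow> ('e \<Rightarrow> 'j \<Rightarrow> 'v \<Rightarrow> 'v) \<Rightarrow> ('j \<Rightarrow> 'v) set set" where
  "prod_submods J S E act \<equiv> stable_submods (prod_space J S) E (prod_act J act)"

lemma prod_space_outside: "p \<in> prod_space J S \<Longrightarrow> j \<notin> J \<Longrightarrow> p j = 0"
  unfolding prod_space_def by blast

lemma prod_submods_empty: "prod_submods {} S E act = {{0}}"
  unfolding stable_submods_def prod_space_def prod_act_def by (auto simp: fun_eq_iff)

lemma prod_submods_coord_kernel:
  assumes N: "N \<in> prod_submods (insert j J) S E act" and "j \<notin> J"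
    and zero: "\<And>e. e \<in> E \<Longrightarrow> act e j 0 = 0"
  shows "{p \<in> N. p j = 0} \<in> prod_submods J S E act"
proof (rule stable_submodsI)
  show "{p \<in> N. p j = 0} \<subseteq> prod_space J S"
    using stable_submodsD(1)[OF N] unfolding prod_space_def by auto
  show "0 \<in> {p \<in> N. p j = 0}"
    using stable_submodsD(2)[OF N] by simp
  show "p + q \<in> {p \<in> N. p j = 0}" if "p \<in> {p \<in> N. p j = 0}" "q \<in> {p \<in> N. p j = 0}" for p q
    using that stable_submodsD(3)[OF N] by simp
  show "prod_act J act e p \<in> {p \<in> N. p j = 0}" if e: "e \<in> E" and p: "p \<in> {p \<in> N. p j = 0}" for e p
  proof -
    have "prod_act (insert j J) act e p = prod_act J act e p"
      using e p zero \<open>j \<notin> J\<close> by (auto simp: prod_act_def fun_eq_iff)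
    then have "prod_act J act e p \<in> N"
      using stable_submodsD(4)[OF N e, of p] p by simp
    moreover have "prod_act J act e p j = 0"
      using \<open>j \<notin> J\<close> by (simp add: prod_act_def)
    ultimately show ?thesis
      by simp
  qed
qed

lemma prod_submods_coord_image:
  assumes "N \<in> prod_submods J S E act" and "j \<in> J"
  shows "(\<lambda>p. p j) ` N \<in> stable_submods (S j) E (\<lambda>e. act e j)"
  by (rule image_stable_submods[OF assms(1)])
    (use \<open>j \<in> J\<close> in \<open>auto simp: prod_space_def prod_act_def\<close>)

lemma prod_act_neg:
  fixes S :: "'j \<Rightarrow> 'v::group_add set"
  assumes "p \<in> prod_space J S" and "\<And>j x. j \<in> J \<Longrightarrow> x \<in> S j \<Longrightarrow> act e j x = - x"
  shows "prod_act J act e p = - p"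
  using assms by (auto simp: prod_space_def prod_act_def fun_eq_iff)

text \<open>An operator acting as \<open>-1\<close> makes stable submonoids subgroups; only then is a submodule
  determined by its kernel and its image under a coordinate projection.\<close>

lemma prod_submods_eq_by_coord:
  fixes S :: "'j \<Rightarrow> 'v::ab_group_add set"
  assumes N: "N \<in> prod_submods J S E act" and N': "N' \<in> prod_submods J S E act" and "N \<subseteq> N'"
    and "e0 \<in> E" and neg: "\<And>j x. j \<in> J \<Longrightarrow> x \<in> S j \<Longrightarrow> act e0 j x = - x"
    and kernel: "{p \<in> N. p j = 0} = {p \<in> N'. p j = 0}" and image: "(\<lambda>p. p j) ` N = (\<lambda>p. p j) ` N'"
  shows "N = N'"
proof
  show "N' \<subseteq> N"
  proof
    fix q assume q: "q \<in> N'"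
    then have "q j \<in> (\<lambda>p. p j) ` N"
      unfolding image by (rule imageI)
    then obtain p where p: "p \<in> N" "q j = p j"
      by (rule imageE)
    have "- p \<in> N"
      using stable_submodsD(4)[OF N \<open>e0 \<in> E\<close> p(1)]
        prod_act_neg[where act = act and e = e0, OF subsetD[OF stable_submodsD(1)[OF N] p(1)] neg] by simp
    then have "q + - p \<in> N'"
      using stable_submodsD(3)[OF N' q] \<open>N \<subseteq> N'\<close> by blast
    moreover have "(q + - p) j = 0"
      using p(2) by simp
    ultimately have "q + - p \<in> {p \<in> N'. p j = 0}"
      by blast
    then have "q + - p \<in> N"
      unfolding kernel[symmetric] by blast
    then have "(q + - p) + p \<in> N"
      using stable_submodsD(3)[OF N _ p(1)] by blast
    then show "q \<in> N"
      by simp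
  qed
qed fact

lemma prod_submods_extend:
  assumes "j \<notin> J" and N1: "N1 \<in> prod_submods J S E act"
    and N2: "N2 \<in> stable_submods (S j) E (\<lambda>e. act e j)"
  shows "{p. p(j := 0) \<in> N1 \<and> p j \<in> N2} \<in> prod_submods (insert j J) S E act"
proof (rule stable_submodsI)
  show "{p. p(j := 0) \<in> N1 \<and> p j \<in> N2} \<subseteq> prod_space (insert j J) S"
    using stable_submodsD(1)[OF N1] stable_submodsD(1)[OF N2]
    unfolding prod_space_def by (force split: if_splits)
  show "0 \<in> {p. p(j := 0) \<in> N1 \<and> p j \<in> N2}"
    using stable_submodsD(2)[OF N1] stable_submodsD(2)[OF N2] by (simp add: zero_fun_def fun_upd_def)
  show "p + q \<in> {p. p(j := 0) \<in> N1 \<and> p j \<in> N2}"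
    if "p \<in> {p. p(j := 0) \<in> N1 \<and> p j \<in> N2}" "q \<in> {p. p(j := 0) \<in> N1 \<and> p j \<in> N2}" for p q
  proof -
    have "(p + q)(j := 0) = p(j := 0) + q(j := 0)"
      by (simp add: fun_eq_iff)
    then show ?thesis
      using that stable_submodsD(3)[OF N1] stable_submodsD(3)[OF N2] by simp
  qed
  show "prod_act (insert j J) act e p \<in> {p. p(j := 0) \<in> N1 \<and> p j \<in> N2}"
    if "e \<in> E" "p \<in> {p. p(j := 0) \<in> N1 \<and> p j \<in> N2}" for e p
  proof -
    have "(prod_act (insert j J) act e p)(j := 0) = prod_act J act e (p(j := 0))"
      using \<open>j \<notin> J\<close> by (auto simp: prod_act_def fun_eq_iff)
    then show ?thesis
      using that stable_submodsD(4)[OF N1] stable_submodsD(4)[OF N2] by (simp add: prod_act_def)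
  qed
qed

lemma length_le_prod_submods:
  fixes S :: "'j \<Rightarrow> 'v::ab_group_add set"
  assumes "finite J" and "e0 \<in> E" and neg: "\<And>j x. j \<in> J \<Longrightarrow> x \<in> S j \<Longrightarrow> act e0 j x = - x"
    and zero: "\<And>e j. e \<in> E \<Longrightarrow> j \<in> J \<Longrightarrow> act e j 0 = 0"
    and "\<And>j. j \<in> J \<Longrightarrow> length_le (stable_submods (S j) E (\<lambda>e. act e j)) (d j)"
  shows "length_le (prod_submods J S E act) (\<Sum>j\<in>J. d j)"
  using assms(1,3-5)
proof (induction J rule: finite_induct)
  case empty
  then show ?case
    unfolding prod_submods_empty by (simp add: length_le_singleton)
next
  case (insert j J)
  have "length_le (prod_submods (insert j J) S E act) ((\<Sum>j\<in>J. d j) + d j)"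
  proof (rule length_le_split[where p = "\<lambda>N. {p \<in> N. p j = 0}" and q = "\<lambda>N. (\<lambda>p. p j) ` N"])
    show "length_le (prod_submods J S E act) (\<Sum>j\<in>J. d j)"
      using insert by simp
    show "length_le (stable_submods (S j) E (\<lambda>e. act e j)) (d j)"
      using insert by simp
    show "{p \<in> N. p j = 0} \<in> prod_submods J S E act" if "N \<in> prod_submods (insert j J) S E act" for N
      using prod_submods_coord_kernel[OF that] insert by simp
    show "(\<lambda>p. p j) ` N \<in> stable_submods (S j) E (\<lambda>e. act e j)"
      if "N \<in> prod_submods (insert j J) S E act" for N
      using prod_submods_coord_image[OF that] by simp
    show "N = N'" if "N \<in> prod_submods (insert j J) S E act" "N' \<in> prod_submods (insert j J) S E act"
      "N \<subseteq> N'" "{p \<in> N. p j = 0} = {p \<in> N'. p j = 0}" "(\<lambda>p. p j) ` N = (\<lambda>p. p j) ` N'" for N N'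
      using prod_submods_eq_by_coord[OF that(1-3) \<open>e0 \<in> E\<close> _ that(4,5)] insert.prems(1) by blast
  qed auto
  then show ?case
    using insert.hyps by (simp add: add.commute)
qed

lemma length_ge_prod_submods:
  fixes S :: "'j \<Rightarrow> 'v::monoid_add set"
  assumes "finite J"
    and "\<And>j. j \<in> J \<Longrightarrow> length_ge (stable_submods (S j) E (\<lambda>e. act e j)) (d j)"
  shows "length_ge (prod_submods J S E act) (\<Sum>j\<in>J. d j)"
  using assms
proof (induction J rule: finite_induct)
  case empty
  then show ?case
    unfolding prod_submods_empty by (simp add: length_ge_singleton)
next
  case (insert j J)
  let ?comb = "\<lambda>N1 N2. {p. p(j := 0) \<in> N1 \<and> p j \<in> N2}"
  have "length_ge (prod_submods (insert j J) S E act) ((\<Sum>j\<in>J. d j) + d j)"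
  proof (rule length_ge_combine[where comb = ?comb])
    show "length_ge (prod_submods J S E act) (\<Sum>j\<in>J. d j)"
      using insert by simp
    show "length_ge (stable_submods (S j) E (\<lambda>e. act e j)) (d j)"
      using insert by simp
    show "?comb N1 N2 \<in> prod_submods (insert j J) S E act"
      if "N1 \<in> prod_submods J S E act" "N2 \<in> stable_submods (S j) E (\<lambda>e. act e j)" for N1 N2
      using prod_submods_extend[OF _ that] insert.hyps by simp
    show "?comb N1 N2 \<subset> ?comb N1' N2"
      if "N1 \<in> prod_submods J S E act" "N1' \<in> prod_submods J S E act"
        "N2 \<in> stable_submods (S j) E (\<lambda>e. act e j)" "N1 \<subset> N1'" for N1 N1' N2
    proof -
      obtain r where r: "r \<in> N1'" "r \<notin> N1"
        using psubset_imp_ex_mem[OF \<open>N1 \<subset> N1'\<close>] by auto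
      have "r j = 0"
        using prod_space_outside[OF subsetD[OF stable_submodsD(1)[OF that(2)] r(1)] insert.hyps(2)] .
      then show ?thesis
        using r stable_submodsD(2)[OF that(3)] \<open>N1 \<subset> N1'\<close>
        by (intro psubset_if_witness[where x = r]) (auto simp: fun_upd_idem)
    qed
    show "?comb N1 N2 \<subset> ?comb N1 N2'"
      if "N1 \<in> prod_submods J S E act" "N2 \<in> stable_submods (S j) E (\<lambda>e. act e j)"
        "N2' \<in> stable_submods (S j) E (\<lambda>e. act e j)" "N2 \<subset> N2'" for N1 N2 N2'
    proof -
      obtain m where m: "m \<in> N2'" "m \<notin> N2"
        using psubset_imp_ex_mem[OF \<open>N2 \<subset> N2'\<close>] by auto
      have "(0 :: 'j \<Rightarrow> 'v)(j := 0) = 0"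
        by (simp add: fun_eq_iff)
      then show ?thesis
        using m stable_submodsD(2)[OF that(1)] \<open>N2 \<subset> N2'\<close>
        by (intro psubset_if_witness[where x = "0(j := m)"]) auto
    qed
  qed (auto simp: subset_iff)
  then show ?case
    using insert.hyps by (simp add: add.commute)
qed

lemma sum_Sigma_fst:
  assumes "finite A" and "\<And>a. a \<in> A \<Longrightarrow> finite (C a)"
  shows "(\<Sum>j\<in>Sigma A C. g (fst j)) = (\<Sum>a\<in>A. card (C a) * g a)"
  using sum.Sigma[of A C "\<lambda>a c. g a"] assms by (simp add: case_prod_beta)

lemma additive_on_zero:
  fixes h :: "'a::ab_group_add \<Rightarrow> 'b::ab_group_add"
  assumes "0 \<in> A" and "\<forall>x\<in>A. \<forall>y\<in>A. h (x + y) = h x + h y"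
  shows "h 0 = 0"
  using assms by (metis add_cancel_right_right add_0)

lemma additive_on_diff:
  fixes h :: "'a::ab_group_add \<Rightarrow> 'b::ab_group_add"
  assumes "\<forall>x\<in>A. \<forall>y\<in>A. h (x + y) = h x + h y" and "x - y \<in> A" and "y \<in> A"
  shows "h (x - y) = h x - h y"
  using assms(1)[rule_format, OF assms(2,3)] by (simp add: algebra_simps)

lemma additive_on_sum:
  fixes h :: "'a::ab_group_add \<Rightarrow> 'b::ab_group_add"
  assumes "0 \<in> A" and "\<forall>x\<in>A. \<forall>y\<in>A. x + y \<in> A" and add: "\<forall>x\<in>A. \<forall>y\<in>A. h (x + y) = h x + h y"
    and "\<forall>i\<in>I. v i \<in> A"
  shows "h (sum v I) = (\<Sum>i\<in>I. h (v i))"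
proof (cases "finite I")
  case True
  then have "h (sum v I) = (\<Sum>i\<in>I. h (v i)) \<and> sum v I \<in> A"
    using assms(4)
  proof (induction I rule: finite_induct)
    case empty
    then show ?case using additive_on_zero[OF assms(1) add] assms(1) by simp
  next
    case (insert i I)
    then show ?case using assms(2) add by auto
  qed
  then show ?thesis ..
next
  case False
  then show ?thesis
    using additive_on_zero[OF assms(1) add] by simp
qed

lemma E_submods_at_eq:
  "E_submods_at Q sc V f i = stable_submods (V i) (End_rep Q sc V f) (\<lambda>\<phi>. \<phi> i)"
  unfolding E_submods_at_def stable_submods_def ..

lemma E_submods_eq:
  "E_submods Q sc V f = prod_submods (verts Q) V (End_rep Q sc V f) (\<lambda>\<phi>. \<phi>)"
  unfolding E_submods_def stable_submods_def total_space_def prod_space_def prod_act_def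
  by (simp add: zero_fun_def plus_fun_def)

locale quiver_rep =
  fixes Q :: "('a, 'b) quiver" and sc :: "'k::field \<Rightarrow> 'v::ab_group_add \<Rightarrow> 'v"
    and V :: "'a \<Rightarrow> 'v set" and f :: "'b \<Rightarrow> 'v \<Rightarrow> 'v"
  assumes finite_quiver: "finite_quiver Q" and is_rep: "is_rep Q sc V f"
begin

sublocale vector_space sc
  using is_rep by (simp add: is_rep_def)

lemma src_in_verts: "\<alpha> \<in> arrs Q \<Longrightarrow> src Q \<alpha> \<in> verts Q"
  and tgt_in_verts: "\<alpha> \<in> arrs Q \<Longrightarrow> tgt Q \<alpha> \<in> verts Q"
  using finite_quiver by (auto simp: finite_quiver_def)

lemma subspace_vertex: "i \<in> verts Q \<Longrightarrow> subspace (V i)"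
  using is_rep by (simp add: is_rep_def)

lemma arrow_map_in: "\<alpha> \<in> arrs Q \<Longrightarrow> x \<in> V (src Q \<alpha>) \<Longrightarrow> f \<alpha> x \<in> V (tgt Q \<alpha>)"
  and arrow_map_add: "\<alpha> \<in> arrs Q \<Longrightarrow> \<forall>x\<in>V (src Q \<alpha>). \<forall>y\<in>V (src Q \<alpha>). f \<alpha> (x + y) = f \<alpha> x + f \<alpha> y"
  and arrow_map_scale: "\<alpha> \<in> arrs Q \<Longrightarrow> x \<in> V (src Q \<alpha>) \<Longrightarrow> f \<alpha> (sc c x) = sc c (f \<alpha> x)"
  using is_rep by (simp_all add: is_rep_def)

lemma arrow_map_diff:
  assumes "\<alpha> \<in> arrs Q" and "x \<in> V (src Q \<alpha>)" and "y \<in> V (src Q \<alpha>)"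
  shows "f \<alpha> (x - y) = f \<alpha> x - f \<alpha> y"
  using additive_on_diff[OF arrow_map_add[OF assms(1)]]
    subspace_diff[OF subspace_vertex[OF src_in_verts[OF assms(1)]]] assms(2,3) by blast

lemma arrow_map_sum:
  assumes "\<alpha> \<in> arrs Q" and "\<forall>a\<in>I. v a \<in> V (src Q \<alpha>)"
  shows "f \<alpha> (sum v I) = (\<Sum>a\<in>I. f \<alpha> (v a))"
  using additive_on_sum[OF subspace_0 _ arrow_map_add[OF assms(1)]] subspace_add
    subspace_vertex[OF src_in_verts[OF assms(1)]] assms(2) by blast

lemma End_rep_add: "\<phi> \<in> End_rep Q sc V f \<Longrightarrow> i \<in> verts Q \<Longrightarrow> \<forall>x\<in>V i. \<forall>y\<in>V i. \<phi> i (x + y) = \<phi> i x + \<phi> i y"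
  and End_rep_scale: "\<phi> \<in> End_rep Q sc V f \<Longrightarrow> i \<in> verts Q \<Longrightarrow> x \<in> V i \<Longrightarrow> \<phi> i (sc c x) = sc c (\<phi> i x)"
  and End_rep_arrow: "\<phi> \<in> End_rep Q sc V f \<Longrightarrow> \<alpha> \<in> arrs Q \<Longrightarrow> x \<in> V (src Q \<alpha>) \<Longrightarrow>
      \<phi> (tgt Q \<alpha>) (f \<alpha> x) = f \<alpha> (\<phi> (src Q \<alpha>) x)"
  by (simp_all add: End_rep_def is_hom_def)

lemma End_rep_zero:
  assumes "\<phi> \<in> End_rep Q sc V f" and "i \<in> verts Q"
  shows "\<phi> i 0 = 0"
  using additive_on_zero[OF subspace_0 End_rep_add[OF assms]] subspace_vertex[OF assms(2)] .

lemma End_rep_diff: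
  assumes "\<phi> \<in> End_rep Q sc V f" and "i \<in> verts Q" and "x \<in> V i" and "y \<in> V i"
  shows "\<phi> i (x - y) = \<phi> i x - \<phi> i y"
  using additive_on_diff[OF End_rep_add[OF assms(1,2)]] subspace_diff[OF subspace_vertex[OF assms(2)]]
    assms(3,4) by blast

lemma End_rep_sum:
  assumes "\<phi> \<in> End_rep Q sc V f" and "i \<in> verts Q" and "\<forall>a\<in>I. v a \<in> V i"
  shows "\<phi> i (sum v I) = (\<Sum>a\<in>I. \<phi> i (v a))"
  using additive_on_sum[OF subspace_0 _ End_rep_add[OF assms(1,2)]] subspace_add
    subspace_vertex[OF assms(2)] assms(3) by blast

lemma uminus_in_End_rep: "(\<lambda>i x. - x) \<in> End_rep Q sc V f"
proof -
  have "f \<alpha> (- x) = - f \<alpha> x" if "\<alpha> \<in> arrs Q" "x \<in> V (src Q \<alpha>)" for \<alpha> x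
    using arrow_map_diff[OF that(1) subspace_0 that(2)] subspace_vertex src_in_verts that
      additive_on_zero[OF subspace_0 arrow_map_add] by simp
  then show ?thesis
    unfolding End_rep_def is_hom_def using subspace_neg subspace_vertex by (auto simp: scale_minus_right)
qed

lemma finite_length_E_submods_at:
  assumes "endo_finite Q sc V f" and "i \<in> verts Q"
  shows "finite_length (E_submods_at Q sc V f i)"
proof -
  obtain n where n: "length_le (prod_submods (verts Q) V (End_rep Q sc V f) (\<lambda>\<phi>. \<phi>)) n"
    using assms(1) unfolding endo_finite_def finite_length_iff_length_le E_submods_eq by blast
  have "length_le (E_submods_at Q sc V f i) n"
    unfolding E_submods_at_eq
  proof (rule length_le_stable_submods_embedding[where h = "\<lambda>x. 0(i := x)", OF n])
    show "0(i := x) \<in> prod_space (verts Q) V" if "x \<in> V i" for x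
      using that assms(2) subspace_0[OF subspace_vertex] by (auto simp: prod_space_def)
    show "(0 :: 'a \<Rightarrow> 'v)(i := 0) = 0" and "0(i := x + y) = 0(i := x) + 0(i := y)" for x y :: 'v
      by (simp_all add: fun_eq_iff)
    show "0(i := \<phi> i x) = prod_act (verts Q) (\<lambda>\<phi>. \<phi>) \<phi> (0(i := x))"
      if "\<phi> \<in> End_rep Q sc V f" for \<phi> x
      using End_rep_zero[OF that] assms(2) by (auto simp: prod_act_def fun_eq_iff)
    show "inj_on (\<lambda>x. 0(i := x)) (V i)"
      by (rule inj_onI) (metis fun_upd_same)
  qed
  then show ?thesis
    unfolding finite_length_iff_length_le by blast
qed

end

context vector_space
begin

lemma independent_finite_if_length_le:
  assumes "length_le {W. subspace W \<and> W \<subseteq> U} n" and "subspace U" and "B \<subseteq> U" and "independent B"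
  shows "finite B"
proof (rule ccontr)
  assume "infinite B"
  then obtain F where F: "F \<subseteq> B" "finite F" "card F = Suc n"
    using infinite_arbitrarily_large by blast
  then obtain xs where xs: "set xs = F" "distinct xs"
    using finite_distinct_list by blast
  define cs where "cs = map (\<lambda>k. span (set (take k xs))) [0..<Suc (Suc n)]"
  have prefix_in_B: "set (take k xs) \<subseteq> B" for k
    using set_take_subset[of k xs] xs(1) F(1) by blast
  have dim_prefix: "dim (span (set (take k xs))) = k" if "k \<le> Suc n" for k
  proof -
    have "length xs = Suc n"
      using distinct_card[OF xs(2)] xs(1) F(3) by simp
    then show ?thesis
      using dim_span_eq_card_independent[OF independent_mono[OF assms(4) prefix_in_B]]
        distinct_card[OF distinct_take[OF xs(2)]] that by simp
  qed
  have "strict_chain {W. subspace W \<and> W \<subseteq> U} cs"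
    unfolding strict_chain_def
  proof (intro conjI)
    show "cs \<noteq> []"
      by (simp add: cs_def)
    show "set cs \<subseteq> {W. subspace W \<and> W \<subseteq> U}"
      using span_minimal[OF _ assms(2)] prefix_in_B assms(3) by (auto simp: cs_def)
    show "sorted_wrt (\<subset>) cs"
      unfolding sorted_wrt_iff_nth_less
    proof (intro allI impI)
      fix a b assume ab: "a < b" "b < length cs"
      then have cs_ab: "cs ! a = span (set (take a xs))" "cs ! b = span (set (take b xs))"
        and "b \<le> Suc n"
        by (simp_all add: cs_def del: upt_Suc)
      have "span (set (take a xs)) \<subseteq> span (set (take b xs))"
        using span_mono[OF set_take_subset_set_take] ab(1) by simp
      moreover have "span (set (take a xs)) \<noteq> span (set (take b xs))"
      proof
        assume "span (set (take a xs)) = span (set (take b xs))"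
        then have "a = b"
          using arg_cong[where f = dim] dim_prefix \<open>a < b\<close> \<open>b \<le> Suc n\<close> by (metis less_imp_le_nat order.trans)
        then show False
          using \<open>a < b\<close> by simp
      qed
      ultimately show "cs ! a \<subset> cs ! b"
        unfolding cs_ab by simp
    qed
  qed
  then show False
    using assms(1) by (auto simp: length_le_def cs_def)
qed

end

context quiver_rep
begin

definition concentrated_subrep :: "'a \<Rightarrow> 'v set \<Rightarrow> 'a \<Rightarrow> 'v set" where
  "concentrated_subrep i W k = (if k = i then W else if (k, i) \<in> (arrow_rel Q)\<^sup>+ then {0} else V k)"

text \<open>Since \<open>Q\<close> has no oriented cycles, no arrow leads from \<open>i\<close>, or from a vertex that is not
  a predecessor of \<open>i\<close>, into \<open>i\<close> or one of its predecessors.\<close>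

lemma concentrated_subrep_in_subreps:
  assumes "acyclic_quiver Q" and "i \<in> verts Q" and "subspace W" and "W \<subseteq> V i"
  shows "Sigma (verts Q) (concentrated_subrep i W) \<in> subreps Q sc V f"
  unfolding subreps_def mem_Collect_eq
proof (rule exI[of _ "concentrated_subrep i W"], intro conjI ballI refl)
  let ?U = "concentrated_subrep i W"
  show "?U k \<subseteq> V k" and "subspace (?U k)" if "k \<in> verts Q" for k
    using assms(3,4) subspace_vertex[OF that] subspace_0[OF subspace_vertex[OF that]]
    by (auto simp: concentrated_subrep_def subspace_def)
  show "f \<alpha> x \<in> ?U (tgt Q \<alpha>)" if \<alpha>: "\<alpha> \<in> arrs Q" and x: "x \<in> ?U (src Q \<alpha>)" for \<alpha> x
  proof -
    have arrow: "(src Q \<alpha>, tgt Q \<alpha>) \<in> arrow_rel Q"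
      using \<alpha> unfolding arrow_rel_def by blast
    have no_cycle: "(k, k) \<notin> (arrow_rel Q)\<^sup>+" for k
      using assms(1) unfolding acyclic_quiver_def by blast
    consider (pred) "(src Q \<alpha>, i) \<in> (arrow_rel Q)\<^sup>+" | (other) "(src Q \<alpha>, i) \<notin> (arrow_rel Q)\<^sup>+"
      by blast
    then show ?thesis
    proof cases
      case pred
      then have "src Q \<alpha> \<noteq> i"
        using no_cycle by auto
      then have "x = 0"
        using x pred by (simp add: concentrated_subrep_def)
      moreover have "0 \<in> ?U (tgt Q \<alpha>)"
        using subspace_0[OF assms(3)] subspace_0[OF subspace_vertex[OF tgt_in_verts[OF \<alpha>]]]
        by (simp add: concentrated_subrep_def)
      ultimately show ?thesis
        using additive_on_zero[OF subspace_0 arrow_map_add[OF \<alpha>]]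
          subspace_vertex[OF src_in_verts[OF \<alpha>]] by simp
    next
      case other
      have "x \<in> V (src Q \<alpha>)"
        using x other assms(4) by (auto simp: concentrated_subrep_def split: if_splits)
      moreover have "tgt Q \<alpha> \<noteq> i" and "(tgt Q \<alpha>, i) \<notin> (arrow_rel Q)\<^sup>+"
        using other arrow no_cycle by (auto intro: trancl_into_trancl2)
      ultimately show ?thesis
        using arrow_map_in[OF \<alpha>] by (simp add: concentrated_subrep_def)
    qed
  qed
qed

lemma independent_finite_if_finite_length:
  assumes "acyclic_quiver Q" and "finite_length_rep Q sc V f" and "i \<in> verts Q"
    and "B \<subseteq> V i" and "independent B"
  shows "finite B"
proof -
  obtain n where n: "length_le (subreps Q sc V f) n"
    using assms(2) unfolding finite_length_rep_def finite_length_iff_length_le by blast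
  have "length_le {W. subspace W \<and> W \<subseteq> V i} n"
  proof (rule length_le_strict_mono[OF n])
    show "Sigma (verts Q) (concentrated_subrep i W) \<in> subreps Q sc V f"
      if "W \<in> {W. subspace W \<and> W \<subseteq> V i}" for W
      using concentrated_subrep_in_subreps[OF assms(1,3)] that by blast
    show "Sigma (verts Q) (concentrated_subrep i W) \<subset> Sigma (verts Q) (concentrated_subrep i W')"
      if WW': "W \<subset> W'" for W W'
    proof -
      obtain w where "w \<in> W' - W"
        using psubset_imp_ex_mem[OF WW'] ..
      moreover have "concentrated_subrep i W k \<subseteq> concentrated_subrep i W' k" for k
        using psubset_imp_subset[OF WW'] by (simp add: concentrated_subrep_def)
      ultimately show ?thesis
        using assms(3)
        by (intro psubset_if_witness[where x = "(i, w)"] Sigma_mono) (auto simp: concentrated_subrep_def)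
    qed
  qed
  then show ?thesis
    using independent_finite_if_length_le subspace_vertex[OF assms(3)] assms(4,5) by blast
qed

end

locale rep_pair =
  X: quiver_rep Q scX VX fX + M: quiver_rep Q scM VM fM
  for Q :: "('a, 'b) quiver"
    and scX :: "'k::field \<Rightarrow> 'x::ab_group_add \<Rightarrow> 'x" and VX fX
    and scM :: "'k \<Rightarrow> 'm::ab_group_add \<Rightarrow> 'm" and VM fM +
  fixes B :: "'a \<Rightarrow> 'x set"
  assumes basis_finite: "i \<in> verts Q \<Longrightarrow> finite (B i)"
    and basis_subset: "i \<in> verts Q \<Longrightarrow> B i \<subseteq> VX i"
    and basis_independent: "i \<in> verts Q \<Longrightarrow> X.independent (B i)"
    and basis_spans: "i \<in> verts Q \<Longrightarrow> VX i \<subseteq> X.span (B i)"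
begin

definition coord_hom :: "('a \<times> 'x \<Rightarrow> 'm) \<Rightarrow> 'a \<Rightarrow> 'x \<Rightarrow> 'm" where
  "coord_hom m i y = (\<Sum>b\<in>B i. scM (X.representation (B i) y b) (m (i, b)))"

lemma coord_hom_in: "i \<in> verts Q \<Longrightarrow> \<forall>b\<in>B i. m (i, b) \<in> VM i \<Longrightarrow> coord_hom m i y \<in> VM i"
  unfolding coord_hom_def using M.subspace_vertex
  by (intro M.subspace_sum M.subspace_scale) auto

lemma coord_hom_add_vec:
  assumes "i \<in> verts Q" and "y \<in> VX i" and "z \<in> VX i"
  shows "coord_hom m i (y + z) = coord_hom m i y + coord_hom m i z"
proof -
  have "X.representation (B i) (y + z) = (\<lambda>b. X.representation (B i) y b + X.representation (B i) z b)"
    using X.representation_add basis_independent basis_spans assms by blast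
  then show ?thesis
    unfolding coord_hom_def by (simp add: M.scale_left_distrib sum.distrib)
qed

lemma coord_hom_scale_vec:
  assumes "i \<in> verts Q" and "y \<in> VX i"
  shows "coord_hom m i (scX c y) = scM c (coord_hom m i y)"
proof -
  have "X.representation (B i) (scX c y) = (\<lambda>b. c * X.representation (B i) y b)"
    using X.representation_scale basis_independent basis_spans assms by blast
  then show ?thesis
    unfolding coord_hom_def by (simp add: M.scale_sum_right)
qed

lemma coord_hom_sum_vec:
  assumes "i \<in> verts Q" and "\<forall>a\<in>I. v a \<in> VX i"
  shows "coord_hom m i (sum v I) = (\<Sum>a\<in>I. coord_hom m i (v a))"
  using additive_on_sum[OF X.subspace_0 _ _ assms(2)] X.subspace_add X.subspace_vertex[OF assms(1)]
    coord_hom_add_vec[OF assms(1)] by blast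

lemma coord_hom_basis:
  assumes "i \<in> verts Q" and "b \<in> B i"
  shows "coord_hom m i b = m (i, b)"
proof -
  have "X.representation (B i) b = (\<lambda>b'. if b' = b then 1 else 0)"
    using X.representation_basis basis_independent assms by blast
  then have "coord_hom m i b = (\<Sum>b'\<in>B i. if b' = b then m (i, b) else 0)"
    unfolding coord_hom_def by (intro sum.cong) auto
  also have "\<dots> = m (i, b)"
    using assms basis_finite by simp
  finally show ?thesis .
qed

lemma coord_hom_add: "coord_hom (p + q) i y = coord_hom p i y + coord_hom q i y"
  unfolding coord_hom_def by (simp add: M.scale_right_distrib sum.distrib)

definition dom_index :: "('a \<times> 'x) set" where
  "dom_index = Sigma (verts Q) B"

definition cod_index :: "('b \<times> 'x) set" where
  "cod_index = Sigma (arrs Q) (\<lambda>\<alpha>. B (src Q \<alpha>))"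

abbreviation dom_space :: "('a \<times> 'x \<Rightarrow> 'm) set" where
  "dom_space \<equiv> prod_space dom_index (\<lambda>j. VM (fst j))"

abbreviation cod_space :: "('b \<times> 'x \<Rightarrow> 'm) set" where
  "cod_space \<equiv> prod_space cod_index (\<lambda>j. VM (tgt Q (fst j)))"

lemma dom_space_vertex: "m \<in> dom_space \<Longrightarrow> i \<in> verts Q \<Longrightarrow> b \<in> B i \<Longrightarrow> m (i, b) \<in> VM i"
  by (auto simp: prod_space_def dom_index_def)

lemma coord_hom_End:
  assumes "\<phi> \<in> End_rep Q scM VM fM" and "i \<in> verts Q" and "m \<in> dom_space"
  shows "coord_hom (prod_act dom_index (\<lambda>\<phi> j. \<phi> (fst j)) \<phi> m) i y = \<phi> i (coord_hom m i y)"
proof -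
  have "coord_hom (prod_act dom_index (\<lambda>\<phi> j. \<phi> (fst j)) \<phi> m) i y
      = (\<Sum>b\<in>B i. scM (X.representation (B i) y b) (\<phi> i (m (i, b))))"
    unfolding coord_hom_def using assms(2) by (intro sum.cong) (auto simp: prod_act_def dom_index_def)
  also have "\<dots> = (\<Sum>b\<in>B i. \<phi> i (scM (X.representation (B i) y b) (m (i, b))))"
    using M.End_rep_scale[OF assms(1,2)] dom_space_vertex[OF assms(3,2)] by simp
  also have "\<dots> = \<phi> i (coord_hom m i y)"
    unfolding coord_hom_def
    by (rule M.End_rep_sum[OF assms(1,2), symmetric])
      (use dom_space_vertex[OF assms(3,2)] M.subspace_scale[OF M.subspace_vertex[OF assms(2)]] in auto)
  finally show ?thesis .
qed

lemma arrow_map_representation: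
  assumes "\<alpha> \<in> arrs Q" and "x \<in> VX (src Q \<alpha>)"
  shows "fX \<alpha> x = (\<Sum>b\<in>B (src Q \<alpha>). scX (X.representation (B (src Q \<alpha>)) x b) (fX \<alpha> b))"
proof -
  let ?s = "src Q \<alpha>"
  have s: "?s \<in> verts Q"
    using X.src_in_verts[OF assms(1)] .
  have "x \<in> X.span (B ?s)"
    using basis_spans[OF s] assms(2) by blast
  then have "fX \<alpha> x = fX \<alpha> (\<Sum>b\<in>B ?s. scX (X.representation (B ?s) x b) b)"
    using X.sum_representation_eq[OF basis_independent[OF s] _ basis_finite[OF s] subset_refl] by simp
  also have "\<dots> = (\<Sum>b\<in>B ?s. fX \<alpha> (scX (X.representation (B ?s) x b) b))"
    by (rule X.arrow_map_sum[OF assms(1)])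
      (use basis_subset[OF s] X.subspace_scale[OF X.subspace_vertex[OF s]] in auto)
  also have "\<dots> = (\<Sum>b\<in>B ?s. scX (X.representation (B ?s) x b) (fX \<alpha> b))"
    using X.arrow_map_scale[OF assms(1)] basis_subset[OF s] by (intro sum.cong) auto
  finally show ?thesis .
qed

text \<open>The map \<open>\<Oplus>\<^sub>i Hom\<^sub>k(X\<^sub>i, M\<^sub>i) \<rightarrow> \<Oplus>\<^sub>\<alpha> Hom\<^sub>k(X\<^sub>s\<^sub>\<alpha>, M\<^sub>t\<^sub>\<alpha>)\<close>,
  \<open>g \<mapsto> (g\<^sub>t\<^sub>\<alpha> \<circ> X\<^sub>\<alpha> - M\<^sub>\<alpha> \<circ> g\<^sub>s\<^sub>\<alpha>)\<^sub>\<alpha>\<close>, whose kernel is \<open>Hom(X, M)\<close>, in coordinates: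
  \<open>g\<^sub>i\<close> is \<open>coord_hom m i\<close>, determined by its values \<open>m (i, b)\<close> on the basis vectors \<open>b \<in> B i\<close>.\<close>

definition delta :: "('a \<times> 'x \<Rightarrow> 'm) \<Rightarrow> 'b \<times> 'x \<Rightarrow> 'm" where
  "delta m j = (if j \<in> cod_index
     then coord_hom m (tgt Q (fst j)) (fX (fst j) (snd j)) - fM (fst j) (m (src Q (fst j), snd j))
     else 0)"

lemma delta_arrow:
  "\<alpha> \<in> arrs Q \<Longrightarrow> b \<in> B (src Q \<alpha>) \<Longrightarrow>
    delta m (\<alpha>, b) = coord_hom m (tgt Q \<alpha>) (fX \<alpha> b) - fM \<alpha> (m (src Q \<alpha>, b))"
  by (simp add: delta_def cod_index_def)

lemma coord_hom_is_hom:
  assumes m: "m \<in> dom_space" and delta: "delta m = 0"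
  shows "is_hom Q scX VX fX scM VM fM (coord_hom m)"
  unfolding is_hom_def
proof (intro conjI ballI allI)
  fix i x assume i: "i \<in> verts Q" and x: "x \<in> VX i"
  show "coord_hom m i x \<in> VM i"
    using coord_hom_in[OF i] dom_space_vertex[OF m i] by blast
  show "coord_hom m i (scX c x) = scM c (coord_hom m i x)" for c
    using coord_hom_scale_vec[OF i x] .
  show "coord_hom m i (x + y) = coord_hom m i x + coord_hom m i y" if "y \<in> VX i" for y
    using coord_hom_add_vec[OF i x that] .
next
  fix \<alpha> x assume \<alpha>: "\<alpha> \<in> arrs Q" and x: "x \<in> VX (src Q \<alpha>)"
  let ?s = "src Q \<alpha>" and ?t = "tgt Q \<alpha>"
  let ?r = "X.representation (B ?s) x"
  have s: "?s \<in> verts Q" and t: "?t \<in> verts Q"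
    using X.src_in_verts[OF \<alpha>] X.tgt_in_verts[OF \<alpha>] .
  have image: "fX \<alpha> b \<in> VX ?t" if "b \<in> B ?s" for b
    using X.arrow_map_in[OF \<alpha>] basis_subset[OF s] that by blast
  have "coord_hom m ?t (fX \<alpha> x) = (\<Sum>b\<in>B ?s. coord_hom m ?t (scX (?r b) (fX \<alpha> b)))"
    unfolding arrow_map_representation[OF \<alpha> x]
    by (rule coord_hom_sum_vec[OF t]) (use image X.subspace_scale[OF X.subspace_vertex[OF t]] in auto)
  also have "\<dots> = (\<Sum>b\<in>B ?s. scM (?r b) (fM \<alpha> (m (?s, b))))"
    using coord_hom_scale_vec[OF t] image delta_arrow[OF \<alpha>, of _ m] delta by simp
  also have "\<dots> = (\<Sum>b\<in>B ?s. fM \<alpha> (scM (?r b) (m (?s, b))))"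
    using M.arrow_map_scale[OF \<alpha>] dom_space_vertex[OF m s] by simp
  also have "\<dots> = fM \<alpha> (\<Sum>b\<in>B ?s. scM (?r b) (m (?s, b)))"
    by (rule M.arrow_map_sum[OF \<alpha>, symmetric])
      (use dom_space_vertex[OF m s] M.subspace_scale[OF M.subspace_vertex[OF s]] in auto)
  finally show "coord_hom m ?t (fX \<alpha> x) = fM \<alpha> (coord_hom m ?s x)"
    unfolding coord_hom_def .
qed

lemma delta_in:
  assumes m: "m \<in> dom_space"
  shows "delta m \<in> cod_space"
  unfolding prod_space_def
proof (intro CollectI conjI ballI allI impI)
  fix j assume "j \<in> cod_index"
  then obtain \<alpha> b where j: "j = (\<alpha>, b)" and \<alpha>: "\<alpha> \<in> arrs Q" and b: "b \<in> B (src Q \<alpha>)"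
    by (auto simp: cod_index_def)
  have s: "src Q \<alpha> \<in> verts Q" and t: "tgt Q \<alpha> \<in> verts Q"
    using X.src_in_verts[OF \<alpha>] X.tgt_in_verts[OF \<alpha>] .
  have "coord_hom m (tgt Q \<alpha>) (fX \<alpha> b) \<in> VM (tgt Q \<alpha>)"
    using coord_hom_in[OF t] dom_space_vertex[OF m t] by blast
  moreover have "fM \<alpha> (m (src Q \<alpha>, b)) \<in> VM (tgt Q \<alpha>)"
    using M.arrow_map_in[OF \<alpha> dom_space_vertex[OF m s b]] .
  ultimately show "delta m j \<in> VM (tgt Q (fst j))"
    using j \<alpha> b M.subspace_diff[OF M.subspace_vertex[OF t]] by (simp add: delta_arrow)
next
  fix j assume "j \<notin> cod_index"
  then show "delta m j = 0"
    by (simp add: delta_def)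
qed

lemma delta_zero: "delta 0 = 0"
proof
  fix j :: "'b \<times> 'x"
  have "fM \<alpha> 0 = 0" if "\<alpha> \<in> arrs Q" for \<alpha>
    using additive_on_zero[OF M.subspace_0 M.arrow_map_add[OF that]]
      M.subspace_vertex[OF X.src_in_verts[OF that]] by simp
  then show "delta 0 j = 0 j"
    by (auto simp: delta_def coord_hom_def cod_index_def)
qed

lemma delta_add:
  assumes "p \<in> dom_space" and "q \<in> dom_space"
  shows "delta (p + q) = delta p + delta q"
proof
  fix j :: "'b \<times> 'x"
  show "delta (p + q) j = (delta p + delta q) j"
  proof (cases "j \<in> cod_index")
    case True
    then obtain \<alpha> b where j: "j = (\<alpha>, b)" and \<alpha>: "\<alpha> \<in> arrs Q" and b: "b \<in> B (src Q \<alpha>)"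
      by (auto simp: cod_index_def)
    have s: "src Q \<alpha> \<in> verts Q"
      using X.src_in_verts[OF \<alpha>] .
    have "fM \<alpha> (p (src Q \<alpha>, b) + q (src Q \<alpha>, b)) = fM \<alpha> (p (src Q \<alpha>, b)) + fM \<alpha> (q (src Q \<alpha>, b))"
      using M.arrow_map_add[OF \<alpha>] dom_space_vertex[OF assms(1) s b] dom_space_vertex[OF assms(2) s b]
      by blast
    then show ?thesis
      using j \<alpha> b by (simp add: delta_arrow coord_hom_add)
  qed (simp add: delta_def)
qed

lemma delta_End:
  assumes "\<phi> \<in> End_rep Q scM VM fM" and "m \<in> dom_space"
  shows "delta (prod_act dom_index (\<lambda>\<phi> j. \<phi> (fst j)) \<phi> m)
    = prod_act cod_index (\<lambda>\<phi> j. \<phi> (tgt Q (fst j))) \<phi> (delta m)"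
proof
  fix j :: "'b \<times> 'x"
  show "delta (prod_act dom_index (\<lambda>\<phi> j. \<phi> (fst j)) \<phi> m) j
    = prod_act cod_index (\<lambda>\<phi> j. \<phi> (tgt Q (fst j))) \<phi> (delta m) j"
  proof (cases "j \<in> cod_index")
    case True
    then obtain \<alpha> b where j: "j = (\<alpha>, b)" and \<alpha>: "\<alpha> \<in> arrs Q" and b: "b \<in> B (src Q \<alpha>)"
      by (auto simp: cod_index_def)
    let ?s = "src Q \<alpha>" and ?t = "tgt Q \<alpha>"
    have s: "?s \<in> verts Q" and t: "?t \<in> verts Q"
      using X.src_in_verts[OF \<alpha>] X.tgt_in_verts[OF \<alpha>] .
    have "(?s, b) \<in> dom_index"
      using s b by (simp add: dom_index_def)
    then have "delta (prod_act dom_index (\<lambda>\<phi> j. \<phi> (fst j)) \<phi> m) j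
        = \<phi> ?t (coord_hom m ?t (fX \<alpha> b)) - fM \<alpha> (\<phi> ?s (m (?s, b)))"
      using j \<alpha> b coord_hom_End[OF assms(1) t assms(2)] by (simp add: delta_arrow prod_act_def)
    also have "\<dots> = \<phi> ?t (coord_hom m ?t (fX \<alpha> b) - fM \<alpha> (m (?s, b)))"
    proof -
      have "coord_hom m ?t (fX \<alpha> b) \<in> VM ?t"
        using coord_hom_in[OF t] dom_space_vertex[OF assms(2) t] by blast
      moreover have "m (?s, b) \<in> VM ?s"
        using dom_space_vertex[OF assms(2) s b] .
      ultimately show ?thesis
        using M.End_rep_diff[OF assms(1) t] M.End_rep_arrow[OF assms(1) \<alpha>] M.arrow_map_in[OF \<alpha>]
        by simp
    qed
    finally show ?thesis
      using True j \<alpha> b by (simp add: delta_arrow prod_act_def)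
  qed (simp add: delta_def prod_act_def)
qed

lemma dom_space_diff: "p \<in> dom_space \<Longrightarrow> q \<in> dom_space \<Longrightarrow> p - q \<in> dom_space"
  using M.subspace_diff[OF M.subspace_vertex] by (auto simp: prod_space_def dom_index_def)

lemma delta_inj_on:
  assumes "\<not> hom_nonzero Q scX VX fX scM VM fM"
  shows "inj_on delta dom_space"
proof (rule inj_onI)
  fix p q assume p: "p \<in> dom_space" and q: "q \<in> dom_space" and "delta p = delta q"
  have pq: "p - q \<in> dom_space"
    using dom_space_diff[OF p q] .
  have "delta (p - q) = 0"
    using additive_on_diff[of dom_space delta p q] delta_add pq q \<open>delta p = delta q\<close> by simp
  then have "is_hom Q scX VX fX scM VM fM (coord_hom (p - q))"
    using coord_hom_is_hom[OF pq] by blast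
  then have vanishes: "coord_hom (p - q) i x = 0" if "i \<in> verts Q" and "x \<in> VX i" for i x
    using assms that unfolding hom_nonzero_def by blast
  show "p = q"
  proof
    fix j :: "'a \<times> 'x"
    show "p j = q j"
    proof (cases "j \<in> dom_index")
      case True
      then obtain i b where j: "j = (i, b)" and i: "i \<in> verts Q" and b: "b \<in> B i"
        by (auto simp: dom_index_def)
      then have "(p - q) j = 0"
        using coord_hom_basis[OF i b, of "p - q"] vanishes[OF i] basis_subset[OF i] by auto
      then show ?thesis
        by simp
    next
      case False
      then show ?thesis
        using prod_space_outside[OF p] prod_space_outside[OF q] by simp
    qed
  qed
qed

lemma weighted_dim_le:
  assumes "\<not> hom_nonzero Q scX VX fX scM VM fM" and "endo_finite Q scM VM fM"
  defines "d \<equiv> \<lambda>i. mod_length (E_submods_at Q scM VM fM i)"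
  shows "(\<Sum>i\<in>verts Q. card (B i) * d i) \<le> (\<Sum>\<alpha>\<in>arrs Q. card (B (src Q \<alpha>)) * d (tgt Q \<alpha>))"
proof -
  let ?E = "End_rep Q scM VM fM"
  have bounds: "length_le (stable_submods (VM i) ?E (\<lambda>\<phi>. \<phi> i)) (d i)"
    "length_ge (stable_submods (VM i) ?E (\<lambda>\<phi>. \<phi> i)) (d i)" if "i \<in> verts Q" for i
  proof -
    have "{0} \<in> stable_submods (VM i) ?E (\<lambda>\<phi>. \<phi> i)"
      using M.subspace_0[OF M.subspace_vertex[OF that]] M.End_rep_zero[OF _ that]
      by (auto simp: stable_submods_def)
    then show "length_le (stable_submods (VM i) ?E (\<lambda>\<phi>. \<phi> i)) (d i)"
      "length_ge (stable_submods (VM i) ?E (\<lambda>\<phi>. \<phi> i)) (d i)"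
      using mod_length_bounds[OF M.finite_length_E_submods_at[OF assms(2) that]]
      unfolding d_def E_submods_at_eq by blast+
  qed
  have finite_verts: "finite (verts Q)" and finite_arrs: "finite (arrs Q)"
    using X.finite_quiver by (simp_all add: finite_quiver_def)
  have "length_ge (prod_submods dom_index (\<lambda>j. VM (fst j)) ?E (\<lambda>\<phi> j. \<phi> (fst j)))
      (\<Sum>j\<in>dom_index. d (fst j))"
    unfolding dom_index_def using finite_verts basis_finite bounds(2)
    by (intro length_ge_prod_submods) auto
  then have ge: "length_ge (prod_submods cod_index (\<lambda>j. VM (tgt Q (fst j))) ?E (\<lambda>\<phi> j. \<phi> (tgt Q (fst j))))
      (\<Sum>j\<in>dom_index. d (fst j))"
    by (rule length_ge_stable_submods_embedding[where h = delta])
      (use delta_in delta_zero delta_add delta_End delta_inj_on[OF assms(1)] in auto)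
  have le: "length_le (prod_submods cod_index (\<lambda>j. VM (tgt Q (fst j))) ?E (\<lambda>\<phi> j. \<phi> (tgt Q (fst j))))
      (\<Sum>j\<in>cod_index. d (tgt Q (fst j)))"
    unfolding cod_index_def
    using finite_arrs basis_finite X.src_in_verts X.tgt_in_verts bounds(1) M.End_rep_zero
    by (intro length_le_prod_submods[OF _ M.uminus_in_End_rep]) auto
  have "(\<Sum>j\<in>dom_index. d (fst j)) \<le> (\<Sum>j\<in>cod_index. d (tgt Q (fst j)))"
    using length_ge_le_trans[OF ge le] .
  then show ?thesis
    unfolding dom_index_def cod_index_def
    using sum_Sigma_fst[OF finite_verts basis_finite, where g = d]
      sum_Sigma_fst[OF finite_arrs basis_finite[OF X.src_in_verts], where g = "\<lambda>\<alpha>. d (tgt Q \<alpha>)"]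
    by simp
qed

end

theorem lemma8:
  fixes Q :: "('a, 'b) quiver"
    and scX :: "'k::field \<Rightarrow> 'x::ab_group_add \<Rightarrow> 'x" and VX :: "'a \<Rightarrow> 'x set" and fX :: "'b \<Rightarrow> 'x \<Rightarrow> 'x"
    and scM :: "'k \<Rightarrow> 'm::ab_group_add \<Rightarrow> 'm" and VM :: "'a \<Rightarrow> 'm set" and fM :: "'b \<Rightarrow> 'm \<Rightarrow> 'm"
  assumes "finite_quiver Q" and "connected_quiver Q" and "acyclic_quiver Q"
    and "is_rep Q scX VX fX" and "finite_length_rep Q scX VX fX"
    and "is_rep Q scM VM fM" and "endo_finite Q scM VM fM"
    and "euler_form Q (dimv Q scX VX) (Dimv Q scM VM fM) > 0"
  shows "hom_nonzero Q scX VX fX scM VM fM"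
proof (rule ccontr)
  assume no_hom: "\<not> hom_nonzero Q scX VX fX scM VM fM"
  interpret X: quiver_rep Q scX VX fX
    using assms(1,4) by unfold_locales
  interpret M: quiver_rep Q scM VM fM
    using assms(1,6) by unfold_locales
  have "\<forall>i. \<exists>Bi. Bi \<subseteq> VX i \<and> X.independent Bi \<and> VX i \<subseteq> X.span Bi \<and> card Bi = X.dim (VX i)"
    using X.basis_exists by metis
  then obtain B where B: "\<And>i. B i \<subseteq> VX i" "\<And>i. X.independent (B i)" "\<And>i. VX i \<subseteq> X.span (B i)"
    and dim: "\<And>i. X.dim (VX i) = card (B i)"
    by metis
  interpret rep_pair Q scX VX fX scM VM fM B
    using X.independent_finite_if_finite_length[OF assms(3,5)] B by unfold_locales auto
  let ?d = "\<lambda>i. mod_length (E_submods_at Q scM VM fM i)"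
  have "euler_form Q (dimv Q scX VX) (Dimv Q scM VM fM)
      = int (\<Sum>i\<in>verts Q. card (B i) * ?d i) - int (\<Sum>\<alpha>\<in>arrs Q. card (B (src Q \<alpha>)) * ?d (tgt Q \<alpha>))"
    unfolding euler_form_def dimv_def Dimv_def dim by simp
  also have "\<dots> \<le> 0"
    using weighted_dim_le[OF no_hom assms(7)] by (simp only: diff_le_0_iff_le of_nat_le_iff)
  finally show False
    using assms(8) by simp
qed

end
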